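(* For integers $n\ge1$ and $k>\ell\ge1$, $\mu^{\{0,1\}}_{k,\ell}(\mathbb{Z}/n\mathbb{Z})\le\left\lfloor\frac{n}{k+\ell}\right\rfloor$.
   Context: For subsets $X,Y$ of an abelian group, $X+Y=\{x+y: x\in X, y\in Y\}$, and for an integer $j\ge 1$, $jX=X+\dots+X$ ($j$ copies); $0X=\{0\}$. For $A,C\subseteq \mathbb{Z}/n\mathbb{Z}$ and an integer $j\ge 1$, define $j *_C A = jA+(j-1)C$. A set $A\subseteq\mathbb{Z}/n\mathbb{Z}$ is $C$-$(k,\ell)$-sum-free if $(k *_C A)\cap(\ell *_C A)=\emptyset$. $\mu^C_{k,\ell}(\mathbb{Z}/n\mathbb{Z})$ denotes the maximum size of a $C$-$(k,\ell)$-sum-free subset of $\mathbb{Z}/n\mathbb{Z}$. *)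

theory Defs
  imports Main
begin

text \<open>Z/nZ is modelled as the carrier {0..<n} of natural numbers with addition mod n.\<close>

definition zsum :: "nat \<Rightarrow> nat set \<Rightarrow> nat set \<Rightarrow> nat set" where
  "zsum n X Y = {(x + y) mod n | x y. x \<in> X \<and> y \<in> Y}"

fun zmult :: "nat \<Rightarrow> nat \<Rightarrow> nat set \<Rightarrow> nat set" where
  "zmult n 0 X = {0}"
| "zmult n (Suc j) X = zsum n X (zmult n j X)"

text \<open>j *_C A = jA + (j-1)C  (used for j \<ge> 1).\<close>
definition cstar :: "nat \<Rightarrow> nat \<Rightarrow> nat set \<Rightarrow> nat set \<Rightarrow> nat set" where
  "cstar n j C A = zsum n (zmult n j A) (zmult n (j - 1) C)"

definition C_sum_free :: "nat \<Rightarrow> nat set \<Rightarrow> nat \<Rightarrow> nat \<Rightarrow> nat set \<Rightarrow> bool" where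
  "C_sum_free n C k l A \<longleftrightarrow> A \<subseteq> {0..<n} \<and> cstar n k C A \<inter> cstar n l C A = {}"

definition mu :: "nat \<Rightarrow> nat set \<Rightarrow> nat \<Rightarrow> nat \<Rightarrow> nat" where
  "mu n C k l = Max (card ` {A. C_sum_free n C k l A})"

end

theory Submission
  imports Defs "HOL-Number_Theory.Cong"
begin

text \<open>
  Write \<open>C = {0, 1}\<close>. The heart of the matter is the inequality
  \<open>|X + B + C| \<ge> min n (|X| + |B|)\<close> for nonempty \<open>X, B \<subseteq> \<int>/n\<int>\<close>, proved by induction
  on \<open>|B|\<close> via the Dyson \<open>e\<close>-transform: replacing \<open>(X, B)\<close> by
  \<open>(X \<union> (B + e), B \<inter> (X - e))\<close> keeps \<open>|X| + |B|\<close>, shrinks \<open>X + B\<close> and, unless \<open>X\<close> is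
  stable under all translations \<open>b' - b\<close> of \<open>B\<close>, strictly shrinks \<open>B\<close>. In the stable case,
  either \<open>X\<close> is everything or some \<open>x + 1 \<notin> X\<close>, and then \<open>X + b\<^sub>0\<close> and \<open>x + 1 + B\<close> are disjoint
  subsets of \<open>X + B + C\<close>. Iterating, \<open>|k *\<^sub>C A| \<ge> min n (k |A|)\<close>; for a sum-free \<open>A\<close> the
  disjoint nonempty sets \<open>k *\<^sub>C A\<close> and \<open>l *\<^sub>C A\<close> both have fewer than \<open>n\<close> elements, so
  \<open>(k + l) |A| \<le> n\<close>.
\<close>

lemma zsum_memI: "x \<in> X \<Longrightarrow> y \<in> Y \<Longrightarrow> (x + y) mod n \<in> zsum n X Y"
  unfolding zsum_def by blast

lemma zsum_memE:
  assumes "z \<in> zsum n X Y"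
  obtains x y where "x \<in> X" "y \<in> Y" "z = (x + y) mod n"
  using assms unfolding zsum_def by blast

lemma zsum_subset_residues: "0 < n \<Longrightarrow> zsum n X Y \<subseteq> {0..<n}"
  unfolding zsum_def by auto

lemma finite_zsum: "0 < n \<Longrightarrow> finite (zsum n X Y)"
  by (meson finite_atLeastLessThan finite_subset zsum_subset_residues)

lemma zsum_commute: "zsum n X Y = zsum n Y X"
  unfolding zsum_def by (metis (no_types, lifting) add.commute)

lemma zsum_assoc: "zsum n (zsum n X Y) Z = zsum n X (zsum n Y Z)"
proof (intro equalityI subsetI)
  fix w assume "w \<in> zsum n (zsum n X Y) Z"
  then obtain x y z where "x \<in> X" "y \<in> Y" "z \<in> Z" "w = ((x + y) mod n + z) mod n"
    by (blast elim: zsum_memE)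
  moreover have "((x + y) mod n + z) mod n = (x + (y + z) mod n) mod n"
    by (simp add: mod_add_left_eq mod_add_right_eq add.assoc)
  ultimately show "w \<in> zsum n X (zsum n Y Z)"
    by (simp add: zsum_memI)
next
  fix w assume "w \<in> zsum n X (zsum n Y Z)"
  then obtain x y z where "x \<in> X" "y \<in> Y" "z \<in> Z" "w = (x + (y + z) mod n) mod n"
    by (blast elim: zsum_memE)
  moreover have "(x + (y + z) mod n) mod n = ((x + y) mod n + z) mod n"
    by (simp add: mod_add_left_eq mod_add_right_eq add.assoc)
  ultimately show "w \<in> zsum n (zsum n X Y) Z"
    by (simp add: zsum_memI)
qed

lemma zsum_zero_right: "X \<subseteq> {0..<n} \<Longrightarrow> zsum n X {0} = X"
  unfolding zsum_def by force

lemma zsum_mono: "X \<subseteq> X' \<Longrightarrow> Y \<subseteq> Y' \<Longrightarrow> zsum n X Y \<subseteq> zsum n X' Y'"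
  unfolding zsum_def by blast

lemma zsum_eq_empty_iff [simp]: "zsum n X Y = {} \<longleftrightarrow> X = {} \<or> Y = {}"
  unfolding zsum_def by blast

lemma zmult_eq_empty_iff [simp]: "zmult n j X = {} \<longleftrightarrow> j > 0 \<and> X = {}"
  by (induction j) auto

lemma inj_on_translate_mod:
  fixes e n :: nat
  shows "inj_on (\<lambda>x. (x + e) mod n) {0..<n}"
proof (rule inj_onI)
  fix x y assume "x \<in> {0..<n}" "y \<in> {0..<n}" "(x + e) mod n = (y + e) mod n"
  then show "x = y"
    using cong_add_rcancel_nat[of x e y n] cong_less_modulus_unique_nat[of x y n]
    by (simp add: cong_def)
qed

lemma card_translate_mod:
  fixes e n :: nat
  shows "X \<subseteq> {0..<n} \<Longrightarrow> card ((\<lambda>x. (x + e) mod n) ` X) = card X"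
  using card_image inj_on_subset[OF inj_on_translate_mod] by blast

lemma translate_mod_cancel:
  fixes b x n :: nat
  assumes "b < n"
  shows "(b + (x + (n - b))) mod n = x mod n"
proof -
  have "b + (x + (n - b)) = x + n" using assms by simp
  then show ?thesis by simp
qed

lemma succ_closed_eq_residues:
  fixes n :: nat
  assumes X: "X \<subseteq> {0..<n}" "X \<noteq> {}" and succ_closed: "\<forall>x\<in>X. (x + 1) mod n \<in> X"
  shows "X = {0..<n}"
proof -
  obtain x\<^sub>0 where "x\<^sub>0 \<in> X" using X by blast
  have orbit: "(x\<^sub>0 + j) mod n \<in> X" for j
  proof (induction j)
    case 0
    then show ?case using \<open>x\<^sub>0 \<in> X\<close> X by auto
  next
    case (Suc j)
    then have "((x\<^sub>0 + j) mod n + 1) mod n \<in> X" using succ_closed by blast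
    then show ?case by (simp add: mod_Suc_eq)
  qed
  have "y \<in> X" if "y < n" for y
  proof -
    have "y = (x\<^sub>0 + (y + n - x\<^sub>0)) mod n" using \<open>x\<^sub>0 \<in> X\<close> X that by auto
    then show ?thesis using orbit by metis
  qed
  then show ?thesis using X by auto
qed

lemma zsum_dyson_transform_subset:
  "zsum n (X \<union> (\<lambda>b. (b + e) mod n) ` B) {b \<in> B. (b + e) mod n \<in> X} \<subseteq> zsum n X B"
proof
  fix w assume "w \<in> zsum n (X \<union> (\<lambda>b. (b + e) mod n) ` B) {b \<in> B. (b + e) mod n \<in> X}"
  then obtain x b where x: "x \<in> X \<union> (\<lambda>b. (b + e) mod n) ` B"
    and b: "b \<in> B" "(b + e) mod n \<in> X" and w: "w = (x + b) mod n"
    by (blast elim: zsum_memE)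
  show "w \<in> zsum n X B"
  proof (cases "x \<in> X")
    case True
    then show ?thesis using b w by (simp add: zsum_memI)
  next
    case False
    then obtain c where "c \<in> B" "x = (c + e) mod n" using x by blast
    then have "w = ((b + e) mod n + c) mod n"
      using w by (simp add: mod_add_left_eq mod_add_right_eq ac_simps)
    then show ?thesis using b \<open>c \<in> B\<close> by (simp add: zsum_memI)
  qed
qed

lemma card_dyson_transform:
  fixes e n :: nat
  assumes X: "X \<subseteq> {0..<n}" and B: "B \<subseteq> {0..<n}"
  shows "card (X \<union> (\<lambda>b. (b + e) mod n) ` B) + card {b \<in> B. (b + e) mod n \<in> X}
    = card X + card B"
proof -
  let ?T = "(\<lambda>b. (b + e) mod n) ` B"
  have "X \<inter> ?T = (\<lambda>b. (b + e) mod n) ` {b \<in> B. (b + e) mod n \<in> X}" by blast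
  moreover have "{b \<in> B. (b + e) mod n \<in> X} \<subseteq> {0..<n}" using B by blast
  ultimately have "card (X \<inter> ?T) = card {b \<in> B. (b + e) mod n \<in> X}"
    by (simp add: card_translate_mod)
  moreover have "card ?T = card B" using B by (rule card_translate_mod)
  moreover have "finite X" "finite B" using X B finite_subset by auto
  ultimately show ?thesis using card_Un_Int[of X ?T] by simp
qed

lemma stable_translates_disjoint:
  fixes n :: nat
  assumes X: "X \<subseteq> {0..<n}" and B: "B \<subseteq> {0..<n}" and "b\<^sub>0 \<in> B" and gap: "c mod n \<notin> X"
    and stable: "\<And>e b b'. b \<in> B \<Longrightarrow> b' \<in> B \<Longrightarrow> (b + e) mod n \<in> X \<Longrightarrow> (b' + e) mod n \<in> X"
  shows "(\<lambda>x. (x + b\<^sub>0) mod n) ` X \<inter> (\<lambda>b. (b + c) mod n) ` B = {}"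
proof (rule ccontr)
  assume "\<not> ?thesis"
  then obtain x b where "x \<in> X" "b \<in> B" and eq: "(x + b\<^sub>0) mod n = (b + c) mod n"
    by blast
  have "b < n" using \<open>b \<in> B\<close> B by auto
  have "(b + (x + (n - b))) mod n \<in> X"
    using \<open>x \<in> X\<close> X \<open>b < n\<close> by (auto simp: translate_mod_cancel)
  then have "(b\<^sub>0 + (x + (n - b))) mod n \<in> X"
    using stable \<open>b \<in> B\<close> \<open>b\<^sub>0 \<in> B\<close> by blast
  also have "(b\<^sub>0 + (x + (n - b))) mod n = ((x + b\<^sub>0) mod n + (n - b)) mod n"
    by (metis add.assoc add.commute mod_add_left_eq)
  also have "\<dots> = (b + (c + (n - b))) mod n"
    unfolding eq by (metis add.assoc mod_add_left_eq)
  also have "\<dots> = c mod n"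
    using \<open>b < n\<close> by (rule translate_mod_cancel)
  finally show False using gap by contradiction
qed

lemma card_zsum_01_ge_stable:
  fixes n :: nat
  assumes n: "0 < n" and X: "X \<subseteq> {0..<n}" "X \<noteq> {}" and B: "B \<subseteq> {0..<n}" "B \<noteq> {}"
    and stable: "\<And>e b b'. b \<in> B \<Longrightarrow> b' \<in> B \<Longrightarrow> (b + e) mod n \<in> X \<Longrightarrow> (b' + e) mod n \<in> X"
  shows "min n (card X + card B) \<le> card (zsum n (zsum n X B) {0, 1 mod n})"
proof -
  define Z where "Z = zsum n (zsum n X B) {0, 1 mod n}"
  have Z_memI: "(x + b + c) mod n \<in> Z" if "x \<in> X" "b \<in> B" "c \<in> {0, 1}" for x b c
  proof -
    have "((x + b) mod n + c mod n) mod n \<in> Z"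
      unfolding Z_def using that by (intro zsum_memI) auto
    then show ?thesis by (simp add: mod_add_eq)
  qed
  have fin: "finite Z" unfolding Z_def using n by (rule finite_zsum)
  obtain b\<^sub>0 where "b\<^sub>0 \<in> B" using B by blast
  let ?P = "(\<lambda>x. (x + b\<^sub>0) mod n) ` X"
  have "?P \<subseteq> Z" using Z_memI[OF _ \<open>b\<^sub>0 \<in> B\<close>, of _ 0] by auto
  have card_P: "card ?P = card X" using X(1) by (rule card_translate_mod)
  show ?thesis
  proof (cases "\<forall>x\<in>X. (x + 1) mod n \<in> X")
    case True
    then have "card X = n" using succ_closed_eq_residues[OF X] by simp
    then show ?thesis
      using card_mono[OF fin \<open>?P \<subseteq> Z\<close>] card_P Z_def by simp
  next
    case False
    then obtain x\<^sub>1 where "x\<^sub>1 \<in> X" and gap: "(x\<^sub>1 + 1) mod n \<notin> X" by blast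
    let ?Q = "(\<lambda>b. (b + (x\<^sub>1 + 1)) mod n) ` B"
    have "?Q \<subseteq> Z"
      using Z_memI[OF \<open>x\<^sub>1 \<in> X\<close> _, of _ 1] by (auto simp: ac_simps)
    have card_Q: "card ?Q = card B" using B(1) by (rule card_translate_mod)
    have "?P \<inter> ?Q = {}"
      using stable_translates_disjoint[OF X(1) B(1) \<open>b\<^sub>0 \<in> B\<close> gap] stable by blast
    moreover have "finite X" "finite B" using X B finite_subset by auto
    ultimately have "card X + card B = card (?P \<union> ?Q)"
      using card_P card_Q by (simp add: card_Un_disjoint)
    also have "\<dots> \<le> card Z"
      using \<open>?P \<subseteq> Z\<close> \<open>?Q \<subseteq> Z\<close> by (intro card_mono fin) auto
    finally show ?thesis unfolding Z_def by simp
  qed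
qed

lemma card_zsum_01_ge:
  fixes n :: nat
  assumes n: "0 < n"
  shows "X \<subseteq> {0..<n} \<Longrightarrow> X \<noteq> {} \<Longrightarrow> B \<subseteq> {0..<n} \<Longrightarrow> B \<noteq> {} \<Longrightarrow>
    min n (card X + card B) \<le> card (zsum n (zsum n X B) {0, 1 mod n})"
proof (induction "card B" arbitrary: X B rule: less_induct)
  case (less B X)
  show ?case
  proof (cases "\<exists>e. \<exists>b\<in>B. \<exists>b'\<in>B. (b + e) mod n \<in> X \<and> (b' + e) mod n \<notin> X")
    case True
    then obtain e b b' where "b \<in> B" "b' \<in> B" "(b + e) mod n \<in> X" "(b' + e) mod n \<notin> X"
      by blast
    define X' where "X' = X \<union> (\<lambda>b. (b + e) mod n) ` B"
    define B' where "B' = {b \<in> B. (b + e) mod n \<in> X}"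
    have "B' \<subset> B" "B' \<noteq> {}"
      unfolding B'_def using \<open>b \<in> B\<close> \<open>b' \<in> B\<close> \<open>(b + e) mod n \<in> X\<close> \<open>(b' + e) mod n \<notin> X\<close>
      by blast+
    moreover have "finite B" using less.prems(3) finite_subset by blast
    ultimately have "card B' < card B" by (simp add: psubset_card_mono)
    moreover have "X' \<subseteq> {0..<n}" "X' \<noteq> {}" "B' \<subseteq> {0..<n}"
      unfolding X'_def using less.prems \<open>B' \<subset> B\<close> n by auto
    ultimately have "min n (card X' + card B') \<le> card (zsum n (zsum n X' B') {0, 1 mod n})"
      using less.hyps \<open>B' \<noteq> {}\<close> by blast
    also have "\<dots> \<le> card (zsum n (zsum n X B) {0, 1 mod n})"
      unfolding X'_def B'_def
      by (intro card_mono finite_zsum n zsum_mono zsum_dyson_transform_subset order_refl)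
    finally show ?thesis
      using card_dyson_transform[OF less.prems(1,3)] unfolding X'_def B'_def by simp
  next
    case False
    then show ?thesis using card_zsum_01_ge_stable[OF n less.prems] by blast
  qed
qed

lemma cstar_one: "A \<subseteq> {0..<n} \<Longrightarrow> cstar n 1 C A = A"
  by (simp add: cstar_def zsum_zero_right zsum_commute[of n "{0}"])

lemma cstar_Suc:
  assumes "1 \<le> j"
  shows "cstar n (Suc j) C A = zsum n (zsum n (cstar n j C A) A) C"
proof -
  obtain i where j: "j = Suc i" using assms by (cases j) auto
  have "cstar n (Suc j) C A = zsum n (zsum n A (zmult n j A)) (zsum n C (zmult n i C))"
    by (simp add: cstar_def j)
  also have "\<dots> = zsum n (zsum n (zsum n (zmult n j A) (zmult n i C)) A) C"
    by (metis zsum_assoc zsum_commute)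
  finally show ?thesis by (simp add: cstar_def j)
qed

lemma cstar_subset_residues: "0 < n \<Longrightarrow> cstar n j C A \<subseteq> {0..<n}"
  unfolding cstar_def by (rule zsum_subset_residues)

lemma cstar_empty: "1 \<le> j \<Longrightarrow> cstar n j C {} = {}"
  by (simp add: cstar_def)

lemma cstar_nonempty: "A \<noteq> {} \<Longrightarrow> C \<noteq> {} \<Longrightarrow> cstar n j C A \<noteq> {}"
  by (simp add: cstar_def)

lemma card_cstar_01_ge:
  fixes n :: nat
  assumes n: "0 < n" and A: "A \<subseteq> {0..<n}" "A \<noteq> {}" and "1 \<le> j"
  shows "min n (j * card A) \<le> card (cstar n j {0, 1 mod n} A)"
  using \<open>1 \<le> j\<close>
proof (induction j rule: nat_induct_at_least)
  case base
  show ?case using cstar_one[OF A(1)] by simp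
next
  case (Suc j)
  let ?S = "cstar n j {0, 1 mod n} A"
  have "min n (Suc j * a) \<le> min n (s + a)" if "min n (j * a) \<le> s" for s a :: nat
    using that by (auto simp: min_def split: if_splits)
  then have "min n (Suc j * card A) \<le> min n (card ?S + card A)"
    using Suc.IH .
  also have "\<dots> \<le> card (cstar n (Suc j) {0, 1 mod n} A)"
    unfolding cstar_Suc[OF Suc.hyps]
    using A by (intro card_zsum_01_ge n cstar_subset_residues cstar_nonempty) auto
  finally show ?case .
qed

lemma C_sum_free_01_card_bound:
  fixes n k l :: nat
  assumes n: "0 < n" and "1 \<le> k" "1 \<le> l" and free: "C_sum_free n {0, 1 mod n} k l A"
  shows "(k + l) * card A \<le> n"
proof (cases "A = {}")
  case False
  let ?K = "cstar n k {0, 1 mod n} A" and ?L = "cstar n l {0, 1 mod n} A"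
  have A: "A \<subseteq> {0..<n}" and disj: "?K \<inter> ?L = {}"
    using free by (auto simp: C_sum_free_def)
  have fin: "finite ?K" "finite ?L"
    using cstar_subset_residues[OF n] by (meson finite_atLeastLessThan finite_subset)+
  have "card ?K + card ?L = card (?K \<union> ?L)"
    by (rule card_Un_disjoint[OF fin disj, symmetric])
  also have "\<dots> \<le> card {0..<n}"
    by (intro card_mono) (simp_all add: cstar_subset_residues[OF n])
  finally have total: "card ?K + card ?L \<le> n" by simp
  have "card ?K > 0" "card ?L > 0"
    using fin False by (simp_all add: card_gt_0_iff cstar_nonempty)
  moreover have "min n (k * card A) \<le> card ?K" "min n (l * card A) \<le> card ?L"
    using card_cstar_01_ge[OF n A False] assms(2,3) by auto
  \<comment> \<open>two nonempty disjoint subsets of \<open>{0..<n}\<close> are proper, so neither \<open>min n\<close> is attained by \<open>n\<close>\<close>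
  moreover have "k * a + l * a \<le> x + y"
    if "x + y \<le> n" "0 < x" "0 < y" "min n (k * a) \<le> x" "min n (l * a) \<le> y"
    for a x y :: nat
    using that by (simp add: min_le_iff_disj)
  ultimately have "k * card A + l * card A \<le> card ?K + card ?L" using total by blast
  then show ?thesis using total by (simp add: add_mult_distrib)
qed simp

theorem theorem3p2:
  fixes n k l :: nat
  assumes "n \<ge> 1" and "k > l" and "l \<ge> 1"
  shows "mu n {0, 1 mod n} k l \<le> n div (k + l)"
proof -
  let ?F = "{A. C_sum_free n {0, 1 mod n} k l A}"
  have "finite ?F"
    by (rule finite_subset[of _ "Pow {0..<n}"]) (auto simp: C_sum_free_def)
  moreover have "{} \<in> ?F"
    using assms by (simp add: C_sum_free_def cstar_empty)
  moreover have "card A \<le> n div (k + l)" if "A \<in> ?F" for A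
    using C_sum_free_01_card_bound[of n k l A] that assms
    by (simp add: less_eq_div_iff_mult_less_eq mult.commute)
  ultimately show ?thesis
    unfolding mu_def by (subst Max_le_iff) auto
qed

end
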